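(* Let $(G,k)$ be an instance of \textsc{Paw-free Edge Editing} with $k>0$ such that there is no independent set of $k+3$ vertices of $G$ all having the same neighborhood. Let $S$ be the set of vertices covered by a maximal (under inclusion) collection of pairwise edge-disjoint induced paws in $G$. Let $s_1,s_2$ be two adjacent vertices of $G$. If there are more than $4k+6$ vertices that belong to triangle-free connected components of $G-S$ and are adjacent to both $s_1$ and $s_2$, then either $(G,k)$ is a no-instance, or every solution $A$ of $(G,k)$ contains the pair $s_1s_2$.
   Context: The paw is the graph on four vertices $x_1,x_2,x_3,x_4$ with edges $x_1x_2,x_2x_3,x_1x_3,x_3x_4$; a graph is paw-free if it has no induced paw. For a set $A$ of unordered vertex pairs, $G\Delta A$ is the graph on $V(G)$ with edge set the symmetric difference of $E(G)$ and $A$. An instance $(G,k)$ of \textsc{Paw-free Edge Editing} asks whether some set $A$ of at most $k$ vertex pairs makes $G\Delta A$ paw-free; such an $A$ is a solution. Neighborhoods are open neighborhoods $N(v)$. *)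

theory Defs
  imports Main
begin

definition vpairs :: "'a set \<Rightarrow> 'a set set" where
  "vpairs V = {e. e \<subseteq> V \<and> card e = 2}"

definition graph :: "'a set \<Rightarrow> 'a set set \<Rightarrow> bool" where
  "graph V E \<longleftrightarrow> finite V \<and> E \<subseteq> vpairs V"

definition adj :: "'a set set \<Rightarrow> 'a \<Rightarrow> 'a \<Rightarrow> bool" where
  "adj E u v \<longleftrightarrow> {u, v} \<in> E"

definition nbhd :: "'a set \<Rightarrow> 'a set set \<Rightarrow> 'a \<Rightarrow> 'a set" where
  "nbhd V E v = {u \<in> V. adj E v u}"

definition edit :: "'a set set \<Rightarrow> 'a set set \<Rightarrow> 'a set set" where
  "edit E A = (E - A) \<union> (A - E)"

definition induced_paw :: "'a set \<Rightarrow> 'a set set \<Rightarrow> 'a set \<Rightarrow> bool" where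
  "induced_paw V E P \<longleftrightarrow> (\<exists>x1 x2 x3 x4.
      P = {x1, x2, x3, x4} \<and> P \<subseteq> V \<and> distinct [x1, x2, x3, x4] \<and>
      adj E x1 x2 \<and> adj E x2 x3 \<and> adj E x1 x3 \<and> adj E x3 x4 \<and>
      \<not> adj E x1 x4 \<and> \<not> adj E x2 x4)"

definition paw_free :: "'a set \<Rightarrow> 'a set set \<Rightarrow> bool" where
  "paw_free V E \<longleftrightarrow> (\<nexists>P. induced_paw V E P)"

definition is_solution :: "'a set \<Rightarrow> 'a set set \<Rightarrow> nat \<Rightarrow> 'a set set \<Rightarrow> bool" where
  "is_solution V E k A \<longleftrightarrow> A \<subseteq> vpairs V \<and> card A \<le> k \<and> paw_free V (edit E A)"

definition paw_edges :: "'a set set \<Rightarrow> 'a set \<Rightarrow> 'a set set" where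
  "paw_edges E P = {e \<in> E. e \<subseteq> P}"

definition edge_disjoint_paws :: "'a set \<Rightarrow> 'a set set \<Rightarrow> 'a set set \<Rightarrow> bool" where
  "edge_disjoint_paws V E C \<longleftrightarrow> (\<forall>P\<in>C. induced_paw V E P) \<and>
     (\<forall>P\<in>C. \<forall>Q\<in>C. P \<noteq> Q \<longrightarrow> paw_edges E P \<inter> paw_edges E Q = {})"

definition maximal_edge_disjoint_paws :: "'a set \<Rightarrow> 'a set set \<Rightarrow> 'a set set \<Rightarrow> bool" where
  "maximal_edge_disjoint_paws V E C \<longleftrightarrow> edge_disjoint_paws V E C \<and>
     (\<forall>C'. C \<subseteq> C' \<and> edge_disjoint_paws V E C' \<longrightarrow> C' = C)"

definition comp :: "'a set \<Rightarrow> 'a set set \<Rightarrow> 'a \<Rightarrow> 'a set" where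
  "comp W E v = {u. (\<lambda>x y. x \<in> W \<and> y \<in> W \<and> adj E x y)\<^sup>*\<^sup>* v u}"

definition triangle_free_set :: "'a set set \<Rightarrow> 'a set \<Rightarrow> bool" where
  "triangle_free_set E X \<longleftrightarrow> (\<nexists>a b c. a \<in> X \<and> b \<in> X \<and> c \<in> X \<and>
      adj E a b \<and> adj E b c \<and> adj E a c)"

definition independent :: "'a set set \<Rightarrow> 'a set \<Rightarrow> bool" where
  "independent E I \<longleftrightarrow> (\<forall>u\<in>I. \<forall>v\<in>I. \<not> adj E u v)"

end

theory Submission
  imports Defs
begin

text \<open>If a solution \<open>A\<close> keeps the edge \<open>s\<^sub>1s\<^sub>2\<close>, discard the at most \<open>2k\<close> common
  neighbours touched by \<open>A\<close>; at least \<open>2k + 7\<close> remain. In the paw-free graph \<open>G \<Delta> A\<close> two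
  non-adjacent common neighbours of an edge have equal neighbourhoods, and untouched vertices have
  the same neighbourhood in \<open>G\<close>. So the non-neighbours of a remaining vertex among the remaining
  ones form an independent set of twins, of size at most \<open>k + 2\<close>. The remaining vertices induce
  a triangle-free graph, hence the neighbours of one of them are pairwise non-adjacent, and at
  most \<open>2(k + 2)\<close> vertices remain.\<close>

lemma adj_commute: "adj E a b = adj E b a"
  unfolding adj_def by (simp add: insert_commute)

lemma adj_vpairsD:
  assumes "E \<subseteq> vpairs V" "adj E a b"
  shows "a \<noteq> b" "a \<in> V" "b \<in> V"
  using assms unfolding adj_def vpairs_def by (auto simp: card_2_iff)

lemma edit_vpairs: "E \<subseteq> vpairs V \<Longrightarrow> A \<subseteq> vpairs V \<Longrightarrow> edit E A \<subseteq> vpairs V"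
  unfolding edit_def by auto

lemma adj_edit_untouched: "x \<notin> \<Union>A \<Longrightarrow> adj (edit E A) x u = adj E x u"
  unfolding adj_def edit_def by auto

lemma nbhd_edit_untouched: "x \<notin> \<Union>A \<Longrightarrow> nbhd V (edit E A) x = nbhd V E x"
  unfolding nbhd_def by (simp add: adj_edit_untouched)

lemma card_Union_vpairs_le: "A \<subseteq> vpairs V \<Longrightarrow> card (\<Union>A) \<le> 2 * card A"
proof -
  assume "A \<subseteq> vpairs V"
  then have "sum card A = sum (\<lambda>_. 2) A"
    by (intro sum.cong) (auto simp: vpairs_def)
  then show ?thesis
    using card_Union_le_sum_card[of A] by simp
qed

lemma paw_freeD:
  assumes "paw_free V E" "{x1, x2, x3, x4} \<subseteq> V" "distinct [x1, x2, x3, x4]"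
    and "adj E x1 x2" "adj E x2 x3" "adj E x1 x3" "adj E x3 x4"
    and "\<not> adj E x1 x4" "\<not> adj E x2 x4"
  shows False
  using assms unfolding paw_free_def induced_paw_def by blast

lemma paw_free_common_neighbour_adj:
  assumes pf: "paw_free V E" and EV: "E \<subseteq> vpairs V"
    and s: "adj E s1 s2" "adj E x s1" "adj E x s2" "adj E y s1" "adj E y s2"
    and xy: "\<not> adj E x y" and xu: "adj E x u"
  shows "adj E y u"
proof (rule ccontr)
  assume yu: "\<not> adj E y u"
  note adjD = adj_vpairsD[OF EV]
  have V: "{s1, s2, x, y, u} \<subseteq> V"
    using adjD(2,3) s xu by blast
  have ne: "s1 \<noteq> s2" "x \<noteq> s1" "x \<noteq> s2" "y \<noteq> s1" "y \<noteq> s2" "x \<noteq> u"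
    using adjD(1) s xu by blast+
  have "x \<noteq> y" "u \<noteq> s1" "u \<noteq> s2" "u \<noteq> y"
    using s xy xu yu by (auto simp: adj_commute)
  note ne = ne this
  consider "adj E u s1" | "adj E u s2" | "\<not> adj E u s1" "\<not> adj E u s2"
    by blast
  then show False
  proof cases
    case 1
    show False
      by (rule paw_freeD[OF pf, of x u s1 y]) (use V ne s xy xu yu 1 in \<open>auto simp: adj_commute\<close>)
  next
    case 2
    show False
      by (rule paw_freeD[OF pf, of x u s2 y]) (use V ne s xy xu yu 2 in \<open>auto simp: adj_commute\<close>)
  next
    case 3
    show False
      by (rule paw_freeD[OF pf, of s1 s2 x u]) (use V ne s xu 3 in \<open>auto simp: adj_commute\<close>)
  qed
qed

lemma paw_free_common_neighbours_twins:
  assumes "paw_free V E" "E \<subseteq> vpairs V"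
    and "adj E s1 s2" "adj E x s1" "adj E x s2" "adj E y s1" "adj E y s2" "\<not> adj E x y"
  shows "nbhd V E x = nbhd V E y"
  using paw_free_common_neighbour_adj[OF assms]
    paw_free_common_neighbour_adj[OF assms(1-3) assms(6,7,4,5), of u for u]
    assms(8) adj_commute
  unfolding nbhd_def by metis

lemma solution_keeping_edge_twins:
  assumes "graph V E" "is_solution V E k A" "{s1, s2} \<notin> A" "adj E s1 s2"
    and "x \<notin> \<Union>A" "y \<notin> \<Union>A" "\<not> adj E x y"
    and "adj E x s1" "adj E x s2" "adj E y s1" "adj E y s2"
  shows "nbhd V E x = nbhd V E y"
proof -
  have "paw_free V (edit E A)" "edit E A \<subseteq> vpairs V"
    using assms(1,2) edit_vpairs unfolding graph_def is_solution_def by auto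
  moreover have "adj (edit E A) s1 s2"
    using assms(3,4) unfolding adj_def edit_def by auto
  ultimately have "nbhd V (edit E A) x = nbhd V (edit E A) y"
    by (rule paw_free_common_neighbours_twins) (use assms(5-) in \<open>simp_all add: adj_edit_untouched\<close>)
  then show ?thesis
    using assms(5,6) by (simp add: nbhd_edit_untouched)
qed

lemma triangle_free_set_if_comps:
  assumes "X \<subseteq> W" "\<forall>x\<in>X. triangle_free_set E (comp W E x)"
  shows "triangle_free_set E X"
  unfolding triangle_free_set_def
proof clarify
  fix a b c assume abc: "a \<in> X" "b \<in> X" "c \<in> X" "adj E a b" "adj E b c" "adj E a c"
  then have "{a, b, c} \<subseteq> comp W E a"
    using assms(1) unfolding comp_def by auto
  then show False
    using assms(2) abc unfolding triangle_free_set_def by blast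
qed

lemma independent_if_twins_of_nonneighbour:
  assumes "E \<subseteq> vpairs V" "\<forall>u\<in>J. nbhd V E u = nbhd V E x" "\<forall>v\<in>J. \<not> adj E x v"
  shows "independent E J"
  unfolding independent_def
proof clarify
  fix u v assume uv: "u \<in> J" "v \<in> J" "adj E u v"
  then have "v \<in> nbhd V E u"
    using adj_vpairsD[OF assms(1)] unfolding nbhd_def by auto
  then show False
    using assms(2,3) uv unfolding nbhd_def by auto
qed

lemma card_non_neighbours_lt:
  assumes EV: "E \<subseteq> vpairs V"
    and no_twins: "\<not> (\<exists>I. I \<subseteq> V \<and> card I = m \<and> independent E I \<and>
                          (\<forall>u\<in>I. \<forall>w\<in>I. nbhd V E u = nbhd V E w))"
    and X: "X \<subseteq> V" "\<forall>x\<in>X. \<forall>y\<in>X. \<not> adj E x y \<longrightarrow> nbhd V E x = nbhd V E y"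
    and "x \<in> X"
  shows "card {y \<in> X. \<not> adj E x y} < m"
proof (rule ccontr)
  assume "\<not> ?thesis"
  then obtain J where J: "J \<subseteq> {y \<in> X. \<not> adj E x y}" "card J = m"
    by (meson not_less obtain_subset_with_card_n)
  have "\<forall>u\<in>J. nbhd V E u = nbhd V E x"
    using J(1) X(2) \<open>x \<in> X\<close> adj_commute by blast
  moreover have "independent E J"
    by (rule independent_if_twins_of_nonneighbour[OF EV calculation]) (use J(1) in blast)
  ultimately show False
    using no_twins J X(1) by (metis (no_types, lifting) mem_Collect_eq subset_iff)
qed

lemma card_triangle_free_lt:
  assumes "finite T" "T \<noteq> {}" "triangle_free_set E T"
    and non_nbrs: "\<And>x. x \<in> T \<Longrightarrow> card {y \<in> T. \<not> adj E x y} < m"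
  shows "card T < 2 * m"
proof -
  obtain x where x: "x \<in> T"
    using assms(2) by blast
  define N where "N = {y \<in> T. adj E x y}"
  have "card N < m"
  proof (cases "N = {}")
    case True
    then show ?thesis
      using non_nbrs[OF x] by simp
  next
    case False
    then obtain y where y: "y \<in> N"
      by blast
    have "N \<subseteq> {z \<in> T. \<not> adj E y z}"
      using assms(3) x y unfolding N_def triangle_free_set_def by blast
    then have "card N \<le> card {z \<in> T. \<not> adj E y z}"
      using assms(1) by (intro card_mono) auto
    then show ?thesis
      using non_nbrs y unfolding N_def by fastforce
  qed
  have "T = {y \<in> T. \<not> adj E x y} \<union> N"
    unfolding N_def by blast
  then have "card T \<le> card {y \<in> T. \<not> adj E x y} + card N"
    by (metis card_Un_le)
  then show ?thesis
    using non_nbrs[OF x] \<open>card N < m\<close> by linarith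
qed

theorem lemma1:
  fixes V :: "'a set" and E :: "'a set set" and k :: nat and C :: "'a set set"
    and s1 s2 :: 'a
  assumes "graph V E"
    and "k > 0"
    and "\<not> (\<exists>I. I \<subseteq> V \<and> card I = k + 3 \<and> independent E I \<and>
              (\<forall>u\<in>I. \<forall>w\<in>I. nbhd V E u = nbhd V E w))"
    and "maximal_edge_disjoint_paws V E C"
    and "S = \<Union>C"
    and "adj E s1 s2"
    and "card {v \<in> V - S. adj E v s1 \<and> adj E v s2 \<and>
                 triangle_free_set E (comp (V - S) E v)} > 4 * k + 6"
  shows "(\<nexists>A. is_solution V E k A) \<or> (\<forall>A. is_solution V E k A \<longrightarrow> {s1, s2} \<in> A)"
proof (intro disjI2 allI impI)
  fix A assume sol: "is_solution V E k A"
  show "{s1, s2} \<in> A"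
  proof (rule ccontr)
    assume keep: "{s1, s2} \<notin> A"
    define T0 where "T0 = {v \<in> V - S. adj E v s1 \<and> adj E v s2 \<and>
                            triangle_free_set E (comp (V - S) E v)}"
    define T where "T = T0 - \<Union>A"
    have V: "finite V" "E \<subseteq> vpairs V" and A: "A \<subseteq> vpairs V" "card A \<le> k"
      using assms(1) sol unfolding graph_def is_solution_def by auto
    have "finite (\<Union>A)"
      using A(1) V(1) unfolding vpairs_def by (auto intro: finite_subset)
    then have "card T0 - card (\<Union>A) \<le> card T"
      unfolding T_def by (rule diff_card_le_card_Diff)
    then have "2 * (k + 3) \<le> card T"
      using card_Union_vpairs_le[OF A(1)] A(2) assms(7) unfolding T0_def by arith
    moreover have "card T < 2 * (k + 3)"
    proof (rule card_triangle_free_lt)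
      show "finite T"
        using V(1) unfolding T_def T0_def by auto
      show "T \<noteq> {}"
        using \<open>2 * (k + 3) \<le> card T\<close> by auto
      show "triangle_free_set E T"
        by (rule triangle_free_set_if_comps[of _ "V - S"]) (auto simp: T_def T0_def)
      show "card {y \<in> T. \<not> adj E x y} < k + 3" if "x \<in> T" for x
        using card_non_neighbours_lt[OF V(2) assms(3) _ _ that]
          solution_keeping_edge_twins[OF assms(1) sol keep assms(6)]
        unfolding T_def T0_def by blast
    qed
    ultimately show False
      by linarith
  qed
qed

end
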